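(* Let $X$ be a finite set with $|X|\geq 2$. Then the $C^*$-algebra $\mathbb{A}_X$ is non-commutative and infinite dimensional.
   Context: For $n\geq 0$, $X^n$ is the set of words of length $n$ in $X$, with $X^0=\{\varnothing\}$. $\mathbb{A}_X$ is the universal $C^*$-algebra generated by elements $\{a_{u,v}: u,v\in X^n,\ n\geq 0\}$ subject to: (i) $a_{\varnothing,\varnothing}=1$; (ii) $a_{u,v}^*=a_{u,v}^2=a_{u,v}$; (iii) for all $n\geq0$, $u,v\in X^n$, $x\in X$: $a_{u,v}=\sum_{y\in X}a_{ux,vy}=\sum_{z\in X}a_{uz,vx}$. *)

theory Defs
  imports Complex_Main
begin

definition l2 :: "(nat \<Rightarrow> complex) set" where
  "l2 = {f. summable (\<lambda>n. (cmod (f n))^2)}"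

definition l2_norm :: "(nat \<Rightarrow> complex) \<Rightarrow> real" where
  "l2_norm f = sqrt (\<Sum>n. (cmod (f n))^2)"

definition l2_inner :: "(nat \<Rightarrow> complex) \<Rightarrow> (nat \<Rightarrow> complex) \<Rightarrow> complex" where
  "l2_inner f g = (\<Sum>n. f n * cnj (g n))"

type_synonym op = "(nat \<Rightarrow> complex) \<Rightarrow> (nat \<Rightarrow> complex)"

text \<open>Bounded linear operators on l2 (only their values on l2 matter).\<close>
definition bounded_op :: "op \<Rightarrow> bool" where
  "bounded_op T \<longleftrightarrow>
     (\<forall>f\<in>l2. T f \<in> l2) \<and>
     (\<forall>f\<in>l2. \<forall>g\<in>l2. \<forall>a. T (\<lambda>n. a * f n + g n) = (\<lambda>n. a * T f n + T g n)) \<and>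
     (\<exists>C. \<forall>f\<in>l2. l2_norm (T f) \<le> C * l2_norm f)"

definition op_norm :: "op \<Rightarrow> real" where
  "op_norm T = Sup ((\<lambda>f. l2_norm (T f)) ` {f \<in> l2. l2_norm f \<le> 1})"

definition is_projection :: "op \<Rightarrow> bool" where
  "is_projection P \<longleftrightarrow> bounded_op P \<and>
     (\<forall>f\<in>l2. P (P f) = P f) \<and>
     (\<forall>f\<in>l2. \<forall>g\<in>l2. l2_inner (P f) g = l2_inner f (P g))"

type_synonym 'x gen = "'x list \<times> 'x list"

text \<open>Generator a_{u,v} with u, v words of the same length n over X.\<close>
definition is_gen :: "'x set \<Rightarrow> 'x gen \<Rightarrow> bool" where
  "is_gen X g \<longleftrightarrow> set (fst g) \<subseteq> X \<and> set (snd g) \<subseteq> X \<and> length (fst g) = length (snd g)"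

definition is_rep :: "'x set \<Rightarrow> ('x gen \<Rightarrow> op) \<Rightarrow> bool" where
  "is_rep X P \<longleftrightarrow>
     (\<forall>g. is_gen X g \<longrightarrow> is_projection (P g)) \<and>
     (\<forall>f\<in>l2. P ([], []) f = f) \<and>
     (\<forall>u v x. is_gen X (u, v) \<and> x \<in> X \<longrightarrow>
        (\<forall>f\<in>l2. P (u, v) f = (\<lambda>k. \<Sum>y\<in>X. P (u @ [x], v @ [y]) f k) \<and>
                 P (u, v) f = (\<lambda>k. \<Sum>z\<in>X. P (u @ [z], v @ [x]) f k)))"

text \<open>Non-commutative polynomials: finitely supported coefficient functions on monomials
  (lists of generators; the empty list is the unit).\<close>
type_synonym 'x ncpoly = "'x gen list \<Rightarrow> complex"

definition is_poly :: "'x set \<Rightarrow> 'x ncpoly \<Rightarrow> bool" where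
  "is_poly X p \<longleftrightarrow> finite {m. p m \<noteq> 0} \<and> (\<forall>m. p m \<noteq> 0 \<longrightarrow> (\<forall>g\<in>set m. is_gen X g))"

fun mono_eval :: "('x gen \<Rightarrow> op) \<Rightarrow> 'x gen list \<Rightarrow> op" where
  "mono_eval P [] f = f"
| "mono_eval P (g # m) f = P g (mono_eval P m f)"

definition poly_eval :: "('x gen \<Rightarrow> op) \<Rightarrow> 'x ncpoly \<Rightarrow> op" where
  "poly_eval P p f = (\<lambda>k. \<Sum>m\<in>{m. p m \<noteq> 0}. p m * mono_eval P m f k)"

definition poly_mult :: "'x ncpoly \<Rightarrow> 'x ncpoly \<Rightarrow> 'x ncpoly" where
  "poly_mult p q = (\<lambda>m. \<Sum>(m1, m2)\<in>{(m1, m2). m1 @ m2 = m}. p m1 * q m2)"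

text \<open>Universal C*-seminorm: supremum of operator norms over all representations on l2(N)
  (every separable representation embeds unitally into one on l2(N), and A_X is separable).\<close>
definition univ_norm :: "'x set \<Rightarrow> 'x ncpoly \<Rightarrow> real" where
  "univ_norm X p = Sup ((\<lambda>P. op_norm (poly_eval P p)) ` {P. is_rep X P})"

text \<open>A_X is the completion of the free algebra modulo the null ideal {p. univ_norm X p = 0};
  its image (the quotient) is a dense *-subalgebra of A_X.\<close>

definition AX_noncommutative :: "'x set \<Rightarrow> bool" where
  "AX_noncommutative X \<longleftrightarrow>
     (\<exists>p q. is_poly X p \<and> is_poly X q \<and>
        univ_norm X (\<lambda>m. poly_mult p q m - poly_mult q p m) \<noteq> 0)"

definition AX_infinite_dimensional :: "'x set \<Rightarrow> bool" where
  "AX_infinite_dimensional X \<longleftrightarrow>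
     (\<forall>n. \<exists>p :: nat \<Rightarrow> 'x ncpoly. (\<forall>i<n. is_poly X (p i)) \<and>
        (\<forall>c :: nat \<Rightarrow> complex. univ_norm X (\<lambda>m. \<Sum>i<n. c i * p i m) = 0 \<longrightarrow> (\<forall>i<n. c i = 0)))"

end

theory Submission
  imports Defs "HOL-Analysis.Convex" "HOL-Combinatorics.Transposition"
begin

(* A representation P of the relations on l2(N) bounds the universal seminorm from below: for
   a unit vector f, the norm of p(P) f is at most univ_norm X p (the generators act as
   contractions, so the supremum is finite).  It therefore suffices to exhibit representations.
   Fix distinct letters a and b.
   Letter-wise bijective maps g on words give one-dimensional representations
   a_{u,v} = [v = g u].  Applying the transposition of a and b to the j-th letter only sends
   a^(i+1) to a^i b exactly when i = j, so these characters separate the generators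
   a_{a^(i+1), a^i b}, which are therefore linearly independent.
   For non-commutativity, the level-2 generators a_{cs,dt} vanish unless c = d, and for each
   first letter c the matrix (a_{cs,ct})_{s,t} is the magic unitary with P_c on the diagonal plus
   1 - P_c at the entries (s, tau s), tau the transposition of a and b.  Taking P_a the projection
   onto e_0 and P_c, for c distinct from a, the projection onto e_0 + e_1 makes a_{aa,aa} and
   a_{bb,bb} non-commuting rank-one projections. *)

lemma summable_l2: "f \<in> l2 \<Longrightarrow> summable (\<lambda>n. (cmod (f n))^2)"
  by (simp add: l2_def)

lemma mult_2_le_sum_squares: "(x::real) * y * 2 \<le> x^2 + y^2"
  using sum_squares_bound[of x y] by (simp add: ac_simps)

lemma summable_l2_mult:
  assumes "f \<in> l2" "g \<in> l2"
  shows "summable (\<lambda>n. cmod (f n) * cmod (g n))" "summable (\<lambda>n. f n * cnj (g n))"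
proof -
  have "summable (\<lambda>n. ((cmod (f n))^2 + (cmod (g n))^2) / 2)"
    using assms by (intro summable_divide summable_add) (auto simp: l2_def)
  then show norm: "summable (\<lambda>n. cmod (f n) * cmod (g n))"
    by (rule summable_comparison_test[rotated]) (auto simp: mult_2_le_sum_squares)
  show "summable (\<lambda>n. f n * cnj (g n))"
    by (rule summable_norm_cancel) (simp add: norm_mult norm)
qed

lemma l2_inner_self:
  assumes "f \<in> l2"
  shows "l2_inner f f = complex_of_real (\<Sum>n. (cmod (f n))^2)"
proof -
  have "l2_inner f f = (\<Sum>n. complex_of_real ((cmod (f n))^2))"
    unfolding l2_inner_def by (rule suminf_cong) (rule complex_norm_square[symmetric])
  also have "\<dots> = complex_of_real (\<Sum>n. (cmod (f n))^2)"
    using assms by (intro suminf_of_real[symmetric]) (simp add: l2_def)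
  finally show ?thesis .
qed

(* |Pf|^2 = <f, Pf> <= (|f|^2 + |Pf|^2) / 2, which avoids Cauchy-Schwarz for series. *)
lemma l2_norm_selfadjoint_idempotent_le:
  assumes maps: "\<forall>f\<in>l2. P f \<in> l2" and idem: "\<forall>f\<in>l2. P (P f) = P f"
    and selfadj: "\<forall>f\<in>l2. \<forall>g\<in>l2. l2_inner (P f) g = l2_inner f (P g)"
    and f: "f \<in> l2"
  shows "l2_norm (P f) \<le> l2_norm f"
proof -
  define h where "h = P f"
  have h: "h \<in> l2" using maps f by (simp add: h_def)
  have "l2_inner h h = l2_inner f (P h)" using selfadj f h unfolding h_def by blast
  also have "P h = h" using idem f by (simp add: h_def)
  finally have inner_hh: "complex_of_real (\<Sum>n. (cmod (h n))^2) = l2_inner f h"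
    by (simp add: l2_inner_self[OF h])
  have "(\<Sum>n. (cmod (h n))^2) = cmod (l2_inner f h)"
    using inner_hh[symmetric] by (simp add: suminf_nonneg summable_l2[OF h])
  also have "\<dots> \<le> (\<Sum>n. cmod (f n * cnj (h n)))"
    unfolding l2_inner_def
    by (rule summable_norm) (simp add: norm_mult summable_l2_mult[OF f h])
  also have "\<dots> \<le> (\<Sum>n. ((cmod (f n))^2 + (cmod (h n))^2) / 2)"
    using summable_l2[OF f] summable_l2[OF h]
    by (intro suminf_le summable_divide summable_add)
       (simp_all add: norm_mult summable_l2_mult[OF f h] mult_2_le_sum_squares)
  also have "\<dots> = ((\<Sum>n. (cmod (f n))^2) + (\<Sum>n. (cmod (h n))^2)) / 2"
    using summable_l2[OF f] summable_l2[OF h] by (simp add: suminf_divide suminf_add summable_add)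
  finally have "(\<Sum>n. (cmod (h n))^2) \<le> (\<Sum>n. (cmod (f n))^2)" by simp
  then show ?thesis unfolding l2_norm_def h_def by simp
qed

lemma l2_norm_projection_le: "is_projection P \<Longrightarrow> f \<in> l2 \<Longrightarrow> l2_norm (P f) \<le> l2_norm f"
  unfolding is_projection_def bounded_op_def by (intro l2_norm_selfadjoint_idempotent_le) auto

lemma is_projectionI:
  assumes "\<forall>f\<in>l2. P f \<in> l2" and "\<forall>f\<in>l2. P (P f) = P f"
    and "\<forall>f\<in>l2. \<forall>g\<in>l2. l2_inner (P f) g = l2_inner f (P g)"
    and "\<forall>f\<in>l2. \<forall>g\<in>l2. \<forall>a. P (\<lambda>n. a * f n + g n) = (\<lambda>n. a * P f n + P g n)"
  shows "is_projection P"
  unfolding is_projection_def bounded_op_def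
  using assms l2_norm_selfadjoint_idempotent_le[OF assms(1-3)] by (auto intro!: exI[of _ 1])

lemma l2_norm_pos:
  assumes "f \<in> l2" "f k \<noteq> 0"
  shows "0 < l2_norm f"
proof -
  have "0 < (cmod (f k))^2" using assms by simp
  also have "\<dots> \<le> (\<Sum>n. (cmod (f n))^2)"
    using assms(1) sum_le_suminf[of "\<lambda>n. (cmod (f n))^2" "{k}"] by (auto simp: l2_def)
  finally show ?thesis unfolding l2_norm_def by simp
qed

definition e0 :: "nat \<Rightarrow> complex" where
  "e0 n = (if n = 0 then 1 else 0)"

lemma e0_in_l2: "e0 \<in> l2" and l2_norm_e0: "l2_norm e0 = 1"
proof -
  have "(\<lambda>n. (cmod (e0 n))^2) = (\<lambda>n. if n = 0 then 1 else 0)"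
    by (simp add: e0_def fun_eq_iff)
  then have "(\<lambda>n. (cmod (e0 n))^2) sums 1"
    using sums_single[of 0 "\<lambda>_. 1::real"] by simp
  then show "e0 \<in> l2" "l2_norm e0 = 1" by (auto simp: l2_def l2_norm_def sums_iff)
qed

lemma finite_prefix_suffix_pairs: "finite {(u, v). u @ v = (w :: 'a list)}"
proof (rule finite_subset)
  show "{(u, v). u @ v = w} \<subseteq> (\<lambda>i. (take i w, drop i w)) ` {..length w}"
  proof
    fix z assume "z \<in> {(u, v). u @ v = w}"
    then obtain u v where "z = (u, v)" "u @ v = w" by auto
    then show "z \<in> (\<lambda>i. (take i w, drop i w)) ` {..length w}"
      by (intro image_eqI[of _ _ "length u"]) auto
  qed
qed simp

lemma mono_eval_contraction:
  assumes rep: "is_rep X P" and gens: "\<forall>g\<in>set m. is_gen X g" and f: "f \<in> l2"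
  shows "mono_eval P m f \<in> l2 \<and> l2_norm (mono_eval P m f) \<le> l2_norm f"
  using gens
proof (induction m)
  case Nil
  then show ?case using f by simp
next
  case (Cons g m)
  then have IH: "mono_eval P m f \<in> l2" "l2_norm (mono_eval P m f) \<le> l2_norm f" by auto
  have "is_projection (P g)" using rep Cons.prems unfolding is_rep_def by (cases g) auto
  then have "P g (mono_eval P m f) \<in> l2"
    and "l2_norm (P g (mono_eval P m f)) \<le> l2_norm (mono_eval P m f)"
    using IH(1) l2_norm_projection_le by (auto simp: is_projection_def bounded_op_def)
  then show ?case using IH(2) by simp
qed

definition coeff_bound :: "'x ncpoly \<Rightarrow> real" where
  "coeff_bound p = sqrt (real (card {m. p m \<noteq> 0}) * (\<Sum>m | p m \<noteq> 0. (cmod (p m))^2))"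

lemma poly_eval_bound:
  assumes p: "is_poly X p" and rep: "is_rep X P" and f: "f \<in> l2" "l2_norm f \<le> 1"
  shows "poly_eval P p f \<in> l2 \<and> l2_norm (poly_eval P p f) \<le> coeff_bound p"
proof -
  define A where "A = {m. p m \<noteq> 0}"
  have A: "finite A" using p by (simp add: is_poly_def A_def)
  define y where "y m = mono_eval P m f" for m
  have y: "y m \<in> l2" "(\<Sum>k. (cmod (y m k))^2) \<le> 1" if "m \<in> A" for m
  proof -
    have "\<forall>g\<in>set m. is_gen X g" using p that by (simp add: A_def is_poly_def)
    then have "y m \<in> l2 \<and> l2_norm (y m) \<le> 1"
      using mono_eval_contraction[OF rep _ f(1), of m] f(2) by (simp add: y_def)
    then show "y m \<in> l2" "(\<Sum>k. (cmod (y m k))^2) \<le> 1" by (simp_all add: l2_norm_def)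
  qed
  define B where "B k = real (card A) * (\<Sum>m\<in>A. (cmod (p m))^2 * (cmod (y m k))^2)" for k
  have "(cmod (poly_eval P p f k))^2 \<le> (\<Sum>m\<in>A. cmod (p m * y m k))^2" for k
    unfolding poly_eval_def y_def A_def by (intro power_mono norm_sum) simp_all
  also have "\<dots> k \<le> B k" for k
    using sum_squared_le_sum_of_squares[of "\<lambda>m. cmod (p m * y m k)" A]
    by (simp add: B_def norm_mult power_mult_distrib mult.commute)
  finally have le: "(cmod (poly_eval P p f k))^2 \<le> B k" for k .
  have B: "summable B"
    unfolding B_def using y by (intro summable_mult summable_sum) (auto simp: l2_def)
  have summable_sq: "summable (\<lambda>k. (cmod (poly_eval P p f k))^2)"
    by (rule summable_comparison_test[OF _ B]) (use le in auto)
  have "(\<Sum>k. (cmod (poly_eval P p f k))^2) \<le> suminf B"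
    by (rule suminf_le[OF le summable_sq B])
  also have "suminf B = real (card A) * (\<Sum>m\<in>A. (cmod (p m))^2 * (\<Sum>k. (cmod (y m k))^2))"
    unfolding B_def using y
    by (subst suminf_mult) (auto intro!: summable_sum summable_mult simp: suminf_sum suminf_mult l2_def)
  also have "\<dots> \<le> real (card A) * (\<Sum>m\<in>A. (cmod (p m))^2)"
    using y by (intro mult_left_mono sum_mono) (auto intro: mult_left_le)
  finally show ?thesis
    using summable_sq by (simp add: coeff_bound_def l2_norm_def l2_def A_def)
qed

lemma op_norm_poly_eval_le:
  assumes "is_poly X p" and "is_rep X P"
  shows "op_norm (poly_eval P p) \<le> coeff_bound p"
  unfolding op_norm_def
proof (rule cSup_least)
  have "e0 \<in> {f \<in> l2. l2_norm f \<le> 1}" using e0_in_l2 l2_norm_e0 by simp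
  then show "(\<lambda>f. l2_norm (poly_eval P p f)) ` {f \<in> l2. l2_norm f \<le> 1} \<noteq> {}" by blast
qed (use poly_eval_bound[OF assms] in auto)

lemma l2_norm_poly_eval_le_univ_norm:
  assumes p: "is_poly X p" and rep: "is_rep X P" and f: "f \<in> l2" "l2_norm f \<le> 1"
  shows "l2_norm (poly_eval P p f) \<le> univ_norm X p"
proof -
  have "l2_norm (poly_eval P p f) \<le> op_norm (poly_eval P p)"
    unfolding op_norm_def
    by (rule cSup_upper) (use f poly_eval_bound[OF p rep] in \<open>auto simp: bdd_above_def\<close>)
  also have "\<dots> \<le> univ_norm X p"
    unfolding univ_norm_def
    by (rule cSup_upper) (use rep op_norm_poly_eval_le[OF p] in \<open>auto simp: bdd_above_def\<close>)
  finally show ?thesis .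
qed

lemma univ_norm_pos:
  assumes p: "is_poly X p" and rep: "is_rep X P" and "poly_eval P p e0 k \<noteq> 0"
  shows "0 < univ_norm X p"
proof -
  have "poly_eval P p e0 \<in> l2" using poly_eval_bound[OF p rep e0_in_l2] l2_norm_e0 by simp
  then have "0 < l2_norm (poly_eval P p e0)" using assms(3) by (rule l2_norm_pos)
  also have "\<dots> \<le> univ_norm X p"
    using l2_norm_poly_eval_le_univ_norm[OF p rep e0_in_l2] l2_norm_e0 by simp
  finally show ?thesis .
qed

definition word_poly :: "'x gen list \<Rightarrow> 'x ncpoly" where
  "word_poly w m = (if m = w then 1 else 0)"

lemma is_poly_word_poly: "\<forall>g\<in>set w. is_gen X g \<Longrightarrow> is_poly X (word_poly w)"
  by (simp add: is_poly_def word_poly_def)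

lemma poly_eval_word_poly: "poly_eval P (word_poly w) = mono_eval P w"
  by (simp add: fun_eq_iff poly_eval_def word_poly_def)

lemma poly_mult_word_poly: "poly_mult (word_poly v) (word_poly w) = word_poly (v @ w)"
proof
  fix m
  have "poly_mult (word_poly v) (word_poly w) m =
      (\<Sum>z\<in>{(m1, m2). m1 @ m2 = m}. if z = (v, w) then 1 else 0)"
    unfolding poly_mult_def word_poly_def by (intro sum.cong) (auto split: if_splits)
  also have "\<dots> = word_poly (v @ w) m"
    using finite_prefix_suffix_pairs[of m] by (simp add: word_poly_def)
  finally show "poly_mult (word_poly v) (word_poly w) m = word_poly (v @ w) m" .
qed

lemma poly_eval_eq_sum_superset:
  assumes "finite A" "{m. p m \<noteq> 0} \<subseteq> A"
  shows "poly_eval P p f k = (\<Sum>m\<in>A. p m * mono_eval P m f k)"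
  unfolding poly_eval_def by (rule sum.mono_neutral_left) (use assms in auto)

lemma is_polyI_support_subset:
  assumes "finite A" "{m. p m \<noteq> 0} \<subseteq> A" "\<forall>m\<in>A. \<forall>g\<in>set m. is_gen X g"
  shows "is_poly X p"
  using assms finite_subset unfolding is_poly_def by blast

lemma is_poly_diff:
  assumes "is_poly X p" "is_poly X q"
  shows "is_poly X (\<lambda>m. p m - q m)"
  by (rule is_polyI_support_subset[of "{m. p m \<noteq> 0} \<union> {m. q m \<noteq> 0}"])
     (use assms in \<open>auto simp: is_poly_def\<close>)

lemma poly_eval_diff:
  assumes "is_poly X p" "is_poly X q"
  shows "poly_eval P (\<lambda>m. p m - q m) f k = poly_eval P p f k - poly_eval P q f k"
proof -
  define A where "A = {m. p m \<noteq> 0} \<union> {m. q m \<noteq> 0}"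
  have A: "finite A" using assms by (simp add: A_def is_poly_def)
  have "poly_eval P (\<lambda>m. p m - q m) f k = (\<Sum>m\<in>A. (p m - q m) * mono_eval P m f k)"
    by (rule poly_eval_eq_sum_superset[OF A]) (auto simp: A_def)
  also have "\<dots> = (\<Sum>m\<in>A. p m * mono_eval P m f k) - (\<Sum>m\<in>A. q m * mono_eval P m f k)"
    by (simp add: left_diff_distrib sum_subtractf)
  also have "\<dots> = poly_eval P p f k - poly_eval P q f k"
    by (simp add: poly_eval_eq_sum_superset[OF A] A_def)
  finally show ?thesis .
qed

lemma is_poly_lincomb:
  assumes "finite I" "\<forall>i\<in>I. is_poly X (p i)"
  shows "is_poly X (\<lambda>m. \<Sum>i\<in>I. c i * p i m)"
proof (rule is_polyI_support_subset[of "\<Union>i\<in>I. {m. p i m \<noteq> 0}"])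
  show "{m. (\<Sum>i\<in>I. c i * p i m) \<noteq> 0} \<subseteq> (\<Union>i\<in>I. {m. p i m \<noteq> 0})"
    by (auto intro: ccontr)
qed (use assms in \<open>auto simp: is_poly_def\<close>)

lemma poly_eval_lincomb:
  assumes "finite I" "\<forall>i\<in>I. is_poly X (p i)"
  shows "poly_eval P (\<lambda>m. \<Sum>i\<in>I. c i * p i m) f k = (\<Sum>i\<in>I. c i * poly_eval P (p i) f k)"
proof -
  define A where "A = (\<Union>i\<in>I. {m. p i m \<noteq> 0})"
  have A: "finite A" using assms by (auto simp: A_def is_poly_def)
  have "poly_eval P (\<lambda>m. \<Sum>i\<in>I. c i * p i m) f k
      = (\<Sum>m\<in>A. (\<Sum>i\<in>I. c i * p i m) * mono_eval P m f k)"
    by (rule poly_eval_eq_sum_superset[OF A]) (auto simp: A_def intro: ccontr)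
  also have "\<dots> = (\<Sum>i\<in>I. c i * (\<Sum>m\<in>A. p i m * mono_eval P m f k))"
    by (simp add: sum_distrib_left sum_distrib_right mult.assoc) (rule sum.swap)
  also have "\<dots> = (\<Sum>i\<in>I. c i * poly_eval P (p i) f k)"
  proof (rule sum.cong[OF refl])
    fix i assume "i \<in> I"
    then have "{m. p i m \<noteq> 0} \<subseteq> A" by (auto simp: A_def)
    then show "c i * (\<Sum>m\<in>A. p i m * mono_eval P m f k) = c i * poly_eval P (p i) f k"
      by (simp add: poly_eval_eq_sum_superset[OF A])
  qed
  finally show ?thesis .
qed

definition block_op :: "complex \<Rightarrow> complex \<Rightarrow> complex \<Rightarrow> complex \<Rightarrow> bool \<Rightarrow> op" where
  "block_op a b c d tail f n =
    (if n = 0 then a * f 0 + b * f 1 else if n = 1 then c * f 0 + d * f 1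
     else if tail then f n else 0)"

lemma block_op_in_l2:
  assumes "f \<in> l2"
  shows "block_op a b c d tail f \<in> l2"
proof -
  have "summable (\<lambda>n. (cmod (f (n + 2)))^2)"
    using assms summable_iff_shift[where f="\<lambda>n. (cmod (f n))^2" and k=2] by (simp add: l2_def)
  then have "summable (\<lambda>n. (cmod (block_op a b c d tail f (n + 2)))^2)"
    by (cases tail) (simp_all add: block_op_def)
  then show ?thesis
    using summable_iff_shift[where f="\<lambda>n. (cmod (block_op a b c d tail f n))^2" and k=2]
    by (simp add: l2_def)
qed

lemma is_projection_block_op:
  assumes idem: "a * a + b * c = a" "a * b + b * d = b" "c * a + d * c = c" "c * b + d * d = d"
    and hermitian: "cnj a = a" "cnj d = d" "cnj b = c"
  shows "is_projection (block_op a b c d tail)"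
proof (rule is_projectionI)
  let ?T = "block_op a b c d tail"
  show "\<forall>f\<in>l2. ?T f \<in> l2" using block_op_in_l2 by blast
  show "\<forall>f\<in>l2. ?T (?T f) = ?T f"
  proof (intro ballI ext)
    fix f :: "nat \<Rightarrow> complex" and n
    have "(a * a + b * c) * f 0 + (a * b + b * d) * f 1 = a * f 0 + b * f 1"
      and "(c * a + d * c) * f 0 + (c * b + d * d) * f 1 = c * f 0 + d * f 1"
      using idem by simp_all
    then show "?T (?T f) n = ?T f n" by (auto simp: block_op_def algebra_simps)
  qed
  show "\<forall>f\<in>l2. \<forall>g\<in>l2. \<forall>s. ?T (\<lambda>n. s * f n + g n) = (\<lambda>n. s * ?T f n + ?T g n)"
    by (auto simp: block_op_def algebra_simps)
  show "\<forall>f\<in>l2. \<forall>g\<in>l2. l2_inner (?T f) g = l2_inner f (?T g)"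
  proof (intro ballI)
    fix f g assume f: "f \<in> l2" and g: "g \<in> l2"
    have tail: "(\<lambda>n. ?T f (n + 2) * cnj (g (n + 2))) = (\<lambda>n. f (n + 2) * cnj (?T g (n + 2)))"
      by (simp add: block_op_def fun_eq_iff)
    have "cnj c = b" using hermitian(3) by auto
    then have head: "(\<Sum>n<2. ?T f n * cnj (g n)) = (\<Sum>n<2. f n * cnj (?T g n))"
      by (simp add: block_op_def numeral_2_eq_2 hermitian algebra_simps)
    show "l2_inner (?T f) g = l2_inner f (?T g)"
      unfolding l2_inner_def
      using suminf_split_initial_segment[OF summable_l2_mult(2)[OF block_op_in_l2[OF f] g], where k=2]
        suminf_split_initial_segment[OF summable_l2_mult(2)[OF f block_op_in_l2[OF g]], where k=2]
        tail head by simp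
  qed
qed

lemma is_projection_id: "is_projection (\<lambda>f. f)"
proof -
  have "(\<lambda>f. f) = block_op 1 0 0 1 True" by (auto simp: block_op_def fun_eq_iff)
  then show ?thesis by (simp add: is_projection_block_op)
qed

lemma is_projection_zero: "is_projection (\<lambda>f n. 0)"
proof -
  have "(\<lambda>f n. 0) = block_op 0 0 0 0 False" by (auto simp: block_op_def fun_eq_iff)
  then show ?thesis by (simp add: is_projection_block_op)
qed

definition graph_rep :: "('x list \<Rightarrow> 'x list) \<Rightarrow> 'x gen \<Rightarrow> op" where
  "graph_rep g uv = (if snd uv = g (fst uv) then (\<lambda>f. f) else (\<lambda>f n. 0))"

lemma is_rep_graph_rep:
  assumes Nil: "g [] = []" and snoc: "\<And>u x. g (u @ [x]) = g u @ [\<sigma> u x]"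
    and bij: "\<And>u. bij_betw (\<sigma> u) X X" and X: "finite X"
  shows "is_rep X (graph_rep g)"
  unfolding is_rep_def
proof (intro conjI allI impI ballI)
  fix uv
  show "is_projection (graph_rep g uv)"
    by (simp add: graph_rep_def is_projection_id is_projection_zero)
next
  fix f :: "nat \<Rightarrow> complex"
  show "graph_rep g ([], []) f = f" by (simp add: graph_rep_def Nil)
next
  fix u v x f
  assume "is_gen X (u, v) \<and> x \<in> X"
  then have x: "x \<in> X" by simp
  show "graph_rep g (u, v) f = (\<lambda>k. \<Sum>y\<in>X. graph_rep g (u @ [x], v @ [y]) f k)"
  proof
    fix k
    have "(\<Sum>y\<in>X. graph_rep g (u @ [x], v @ [y]) f k)
        = (\<Sum>y\<in>X. if y = \<sigma> u x then graph_rep g (u, v) f k else 0)"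
      by (intro sum.cong) (auto simp: graph_rep_def snoc)
    also have "\<dots> = graph_rep g (u, v) f k"
      using X bij x by (auto simp: bij_betw_def)
    finally show "graph_rep g (u, v) f k = (\<Sum>y\<in>X. graph_rep g (u @ [x], v @ [y]) f k)" ..
  qed
  show "graph_rep g (u, v) f = (\<lambda>k. \<Sum>z\<in>X. graph_rep g (u @ [z], v @ [x]) f k)"
  proof
    fix k
    let ?F = "\<lambda>w. if w = x then graph_rep g (u, v) f k else 0"
    have "(\<Sum>z\<in>X. graph_rep g (u @ [z], v @ [x]) f k) = (\<Sum>z\<in>X. ?F (\<sigma> u z))"
      by (intro sum.cong) (auto simp: graph_rep_def snoc)
    also have "\<dots> = (\<Sum>w\<in>X. ?F w)" by (rule sum.reindex_bij_betw[OF bij])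
    also have "\<dots> = graph_rep g (u, v) f k" using X x by simp
    finally show "graph_rep g (u, v) f k = (\<Sum>z\<in>X. graph_rep g (u @ [z], v @ [x]) f k)" ..
  qed
qed

definition swap_at :: "'x \<Rightarrow> 'x \<Rightarrow> nat \<Rightarrow> 'x list \<Rightarrow> 'x list" where
  "swap_at a b j w = w[j := transpose a b (w ! j)]"

lemma swap_at_Nil: "swap_at a b j [] = []"
  by (simp add: swap_at_def)

lemma swap_at_snoc:
  "swap_at a b j (u @ [x]) = swap_at a b j u @ [if length u = j then transpose a b x else x]"
  by (cases "j < length u")
     (auto simp: swap_at_def list_update_append nth_append list_update_beyond split: nat.split)

lemma is_rep_swap_at:
  assumes "finite X" "a \<in> X" "b \<in> X"
  shows "is_rep X (graph_rep (swap_at a b j))"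
proof (rule is_rep_graph_rep[where \<sigma>="\<lambda>u x. if length u = j then transpose a b x else x"])
  show "bij_betw (\<lambda>x. if length u = j then transpose a b x else x) X X" for u
    using assms by (cases "length u = j") (simp_all add: bij_betw_def)
qed (simp_all add: assms swap_at_Nil swap_at_snoc)

lemma swap_at_replicate_eq_iff:
  assumes "a \<noteq> b"
  shows "swap_at a b j (replicate (Suc i) a) = replicate i a @ [b] \<longleftrightarrow> i = j"
proof
  assume eq: "swap_at a b j (replicate (Suc i) a) = replicate i a @ [b]"
  show "i = j"
  proof (rule ccontr)
    assume "i \<noteq> j"
    then have "swap_at a b j (replicate (Suc i) a) ! i = a"
      by (simp add: swap_at_def nth_list_update del: replicate_Suc)
    moreover have "(replicate i a @ [b]) ! i = b" by (simp add: nth_append)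
    ultimately show False using eq assms by simp
  qed
next
  assume "i = j"
  have "replicate (Suc i) a = replicate i a @ [a]" by (simp add: replicate_append_same)
  then show "swap_at a b j (replicate (Suc i) a) = replicate i a @ [b]"
    using \<open>i = j\<close> by (simp add: swap_at_def list_update_append nth_append del: replicate_Suc)
qed

lemma AX_infinite_dimensional_if_distinct:
  assumes X: "finite X" "a \<in> X" "b \<in> X" and "a \<noteq> b"
  shows "AX_infinite_dimensional X"
  unfolding AX_infinite_dimensional_def
proof
  fix n :: nat
  define gen where "gen i = (replicate (Suc i) a, replicate i a @ [b])" for i
  define p where "p i = word_poly [gen i]" for i
  have p: "\<forall>i\<in>{..<n}. is_poly X (p i)"
    using X by (auto simp: p_def gen_def is_gen_def intro!: is_poly_word_poly)
  have eval: "poly_eval (graph_rep (swap_at a b j)) (\<lambda>m. \<Sum>i<n. c i * p i m) e0 0 = c j"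
    if "j < n" for c j
  proof -
    let ?P = "graph_rep (swap_at a b j)"
    have "poly_eval ?P (\<lambda>m. \<Sum>i<n. c i * p i m) e0 0 = (\<Sum>i<n. c i * ?P (gen i) e0 0)"
      by (subst poly_eval_lincomb[OF finite_lessThan p]) (simp add: p_def poly_eval_word_poly)
    also have "\<dots> = (\<Sum>i<n. if i = j then c j else 0)"
      using swap_at_replicate_eq_iff[OF \<open>a \<noteq> b\<close>]
      by (intro sum.cong) (auto simp: graph_rep_def gen_def e0_def eq_commute[of "replicate _ a @ [b]"])
    also have "\<dots> = c j" using that by simp
    finally show ?thesis .
  qed
  have "c j = 0" if "univ_norm X (\<lambda>m. \<Sum>i<n. c i * p i m) = 0" "j < n" for c j
    using univ_norm_pos[OF is_poly_lincomb[OF finite_lessThan p, of c] is_rep_swap_at[OF X, of j], where k=0]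
      eval[OF that(2)] that(1)
    by fastforce
  then show "\<exists>p. (\<forall>i<n. is_poly X (p i)) \<and>
      (\<forall>c. univ_norm X (\<lambda>m. \<Sum>i<n. c i * p i m) = 0 \<longrightarrow> (\<forall>i<n. c i = 0))"
    using p by (intro exI[of _ p]) auto
qed

definition letter_proj :: "'x \<Rightarrow> 'x \<Rightarrow> op" where
  "letter_proj a c =
    (if c = a then block_op 1 0 0 0 False else block_op (1/2) (1/2) (1/2) (1/2) False)"

definition letter_coproj :: "'x \<Rightarrow> 'x \<Rightarrow> op" where
  "letter_coproj a c =
    (if c = a then block_op 0 0 0 1 True else block_op (1/2) (-1/2) (-1/2) (1/2) True)"

lemma is_projection_letter_proj: "is_projection (letter_proj a c)"
  by (simp add: letter_proj_def is_projection_block_op)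

lemma is_projection_letter_coproj: "is_projection (letter_coproj a c)"
  by (simp add: letter_coproj_def is_projection_block_op)

lemma letter_proj_add_coproj: "letter_proj a c f k + letter_coproj a c f k = f k"
  by (auto simp: letter_proj_def letter_coproj_def block_op_def algebra_simps)

definition swap_block :: "'x \<Rightarrow> 'x \<Rightarrow> 'x \<Rightarrow> 'x \<Rightarrow> 'x \<Rightarrow> op" where
  "swap_block a b c s t f k =
    (if t = s then letter_proj a c f k else 0) + (if t = transpose a b s then letter_coproj a c f k else 0)"

lemma is_projection_swap_block: "is_projection (swap_block a b c s t)"
proof -
  consider "t = s" "t = transpose a b s" | "t = s" "t \<noteq> transpose a b s"
    | "t \<noteq> s" "t = transpose a b s" | "t \<noteq> s" "t \<noteq> transpose a b s"
    by blast
  then show ?thesis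
  proof cases
    case 1
    then have "swap_block a b c s t = (\<lambda>f. f)"
      by (simp add: fun_eq_iff swap_block_def letter_proj_add_coproj)
    then show ?thesis by (simp add: is_projection_id)
  next
    case 2
    then have "swap_block a b c s t = letter_proj a c" by (simp add: fun_eq_iff swap_block_def)
    then show ?thesis by (simp add: is_projection_letter_proj)
  next
    case 3
    then have "swap_block a b c s t = letter_coproj a c" by (simp add: fun_eq_iff swap_block_def)
    then show ?thesis by (simp add: is_projection_letter_coproj)
  next
    case 4
    then have "swap_block a b c s t = (\<lambda>f n. 0)" by (simp add: fun_eq_iff swap_block_def)
    then show ?thesis by (simp add: is_projection_zero)
  qed
qed

lemma swap_block_row_sum:
  assumes "finite X" "a \<in> X" "b \<in> X" "s \<in> X"
  shows "(\<Sum>t\<in>X. swap_block a b c s t f k) = f k"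
proof -
  have "transpose a b s \<in> X" using assms by (simp add: transpose_def)
  then show ?thesis
    using assms by (simp add: swap_block_def sum.distrib letter_proj_add_coproj)
qed

lemma swap_block_col_sum:
  assumes "finite X" "a \<in> X" "b \<in> X" "t \<in> X"
  shows "(\<Sum>s\<in>X. swap_block a b c s t f k) = f k"
proof -
  have "t = transpose a b s \<longleftrightarrow> s = transpose a b t" for s by auto
  moreover have "transpose a b t \<in> X" using assms by (simp add: transpose_def)
  ultimately show ?thesis
    using assms by (simp add: swap_block_def sum.distrib letter_proj_add_coproj eq_commute[of t])
qed

fun block_rep :: "'x \<Rightarrow> 'x \<Rightarrow> 'x gen \<Rightarrow> op" where
  "block_rep a b (c # s # u, d # t # v) =
    (if c = d \<and> u = v then swap_block a b c s t else (\<lambda>f n. 0))"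
| "block_rep a b ([c], [d]) = (if c = d then (\<lambda>f. f) else (\<lambda>f n. 0))"
| "block_rep a b _ = (\<lambda>f. f)"

lemma is_projection_block_rep: "is_projection (block_rep a b g)"
  by (induction a b g rule: block_rep.induct)
     (simp_all add: is_projection_swap_block is_projection_id is_projection_zero)

lemma is_rep_block_rep:
  assumes X: "finite X" "a \<in> X" "b \<in> X"
  shows "is_rep X (block_rep a b)"
  unfolding is_rep_def
proof (intro conjI allI impI ballI)
  fix g show "is_projection (block_rep a b g)" by (rule is_projection_block_rep)
next
  fix f :: "nat \<Rightarrow> complex" show "block_rep a b ([], []) f = f" by simp
next
  fix u v x f
  assume "is_gen X (u, v) \<and> x \<in> X"
  then have len: "length u = length v" and x: "x \<in> X" by (auto simp: is_gen_def)
  have "block_rep a b (u, v) f k = (\<Sum>y\<in>X. block_rep a b (u @ [x], v @ [y]) f k) \<and>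
        block_rep a b (u, v) f k = (\<Sum>z\<in>X. block_rep a b (u @ [z], v @ [x]) f k)" for k
  proof (cases u)
    case Nil
    then show ?thesis using len X x by (simp add: eq_commute[of x] if_distrib[of "\<lambda>h. h f k"])
  next
    case (Cons c u')
    then obtain d v' where v: "v = d # v'" using len by (cases v) auto
    show ?thesis
    proof (cases u')
      case Nil
      then show ?thesis
        using Cons v len swap_block_row_sum[OF X x] swap_block_col_sum[OF X x] by simp
    next
      case (Cons s u'')
      then obtain t v'' where "v' = t # v''" using len \<open>u = c # u'\<close> v by (cases v') auto
      then show ?thesis
        using Cons \<open>u = c # u'\<close> v X x
        by (cases "c = d \<and> u'' = v''") (simp_all add: if_distrib[of "\<lambda>h. h f k"], auto)
    qed
  qed
  then show "block_rep a b (u, v) f = (\<lambda>k. \<Sum>y\<in>X. block_rep a b (u @ [x], v @ [y]) f k)"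
    and "block_rep a b (u, v) f = (\<lambda>k. \<Sum>z\<in>X. block_rep a b (u @ [z], v @ [x]) f k)"
    by auto
qed

lemma AX_noncommutative_if_distinct:
  assumes X: "finite X" "a \<in> X" "b \<in> X" and "a \<noteq> b"
  shows "AX_noncommutative X"
proof -
  define g where "g = ([a, a], [a, a])"
  define h where "h = ([b, b], [b, b])"
  have "\<forall>x\<in>set [g, h]. is_gen X x" using X by (auto simp: g_def h_def is_gen_def)
  then have gh: "is_poly X (word_poly [g])" "is_poly X (word_poly [h])"
    and words: "is_poly X (word_poly [g, h])" "is_poly X (word_poly [h, g])"
    by (simp_all add: is_poly_word_poly)
  have "block_rep a b g = block_op 1 0 0 0 False"
    and "block_rep a b h = block_op (1/2) (1/2) (1/2) (1/2) False"
    using \<open>a \<noteq> b\<close> by (simp_all add: g_def h_def swap_block_def letter_proj_def fun_eq_iff)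
  then have "poly_eval (block_rep a b) (\<lambda>m. word_poly [g, h] m - word_poly [h, g] m) e0 1 \<noteq> 0"
    by (simp add: poly_eval_diff[OF words] poly_eval_word_poly block_op_def e0_def)
  then have "0 < univ_norm X (\<lambda>m. word_poly [g, h] m - word_poly [h, g] m)"
    by (rule univ_norm_pos[OF is_poly_diff[OF words] is_rep_block_rep[OF X]])
  moreover have "(\<lambda>m. poly_mult (word_poly [g]) (word_poly [h]) m - poly_mult (word_poly [h]) (word_poly [g]) m)
      = (\<lambda>m. word_poly [g, h] m - word_poly [h, g] m)"
    by (simp add: poly_mult_word_poly)
  ultimately show ?thesis
    unfolding AX_noncommutative_def using gh
    by (intro exI[of _ "word_poly [g]"] exI[of _ "word_poly [h]"] conjI) simp_all
qed

theorem proposition3p7: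
  fixes X :: "'x set"
  assumes "finite X" and "card X \<ge> 2"
  shows "AX_noncommutative X \<and> AX_infinite_dimensional X"
proof -
  have "\<not> card X \<le> Suc 0" using assms(2) by simp
  then obtain a b where ab: "a \<in> X" "b \<in> X" "a \<noteq> b"
    using card_le_Suc0_iff_eq[OF assms(1)] by blast
  show ?thesis
    using AX_noncommutative_if_distinct[OF assms(1) ab]
      AX_infinite_dimensional_if_distinct[OF assms(1) ab] ..
qed

end
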